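(* Consider the following setting and algorithm (the "MPTPT-based routing algorithm"). Network: a directed graph $G_0=(V_0,E_0)$ with $V_0=V_{sw}\cup V_{pm}$, $V_{sw}\cap V_{pm}=\emptyset$ (switch nodes and physical-machine (PM) nodes). Each PM $u\in V_{pm}$ is connected to exactly one switch by two links (one in each direction), and no switch is connected to more than one PM; for a switch $v$ attached to a PM we write $\hat v$ for that PM, and $V_{sw\rightarrow pm}\subseteq V_{sw}$ is the set of such switches. All other edges join two switches. Each edge $e$ has capacity $g(e)\ge 0$ and each PM $u$ has processing capacity $b(u)\ge 0$. There are $M$ commodities $com_i=\langle s_i,t_i,d_i,c_i\rangle$, $i=1,\dots,M$, with source $s_i\in V_{sw}$, destination $t_i\in V_{sw}$, demand $d_i>0$ and class $c_i\in\{1,\dots,C\}$, where $C$ is the number of distinct classes; a class $k$ has a per-unit processing cost $p(k)>0$. Let $V_T$ be the set of distinct destinations $\{t_1,\dots,t_M\}$. Step 1. Build $G_1=(V_1,E_1)$: delete the PM nodes and their incident edges, add $C$ new nodes $\mathcal P_1,\dots,\mathcal P_C$ (set $V_{\mathcal P}$), and add an edge $(v,\mathcal P_k)$ for every $v\in V_{sw\rightarrow pm}$ and every $k$. For $t=\mathcal P_k$ and $v\in V_{sw}$ let $d_t(v)$ be the total demand of commodities of class $k$ with source $v$ ($d_t(v)=0$ for $v\in V_{\mathcal P}$). Compute a basic feasible solution $(f_t(e))_{t\in V_{\mathcal P},e\in E_1}$ of the LP: minimize $\sum_{e\in E_1,t\in V_{\mathcal P}} f_t(e)$ subject to (i) for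 all $t\in V_{\mathcal P}$ and $v\in V_1$, $v\ne t$: $\sum_{(v,w)\in E_1}f_t(v,w)-\sum_{(u,v)\in E_1}f_t(u,v)=d_t(v)$; (ii) for all $e\in E_1\cap E_0$: $\sum_t f_t(e)\le g(e)$; (iii) for all $v\in V_{sw\rightarrow pm}$: $\sum_t f_t(v,t)\le\min\{g(v,\hat v),g(\hat v,v)\}$; (iv) for all $v\in V_{sw\rightarrow pm}$: $\sum_{t=\mathcal P_k} p(k) f_t(v,t)\le b(\hat v)$; (v) $f_t(e)\ge 0$. Then apply Flow2Trees$(t)$ (defined below) to this solution for every $t\in V_{\mathcal P}$. Step 2. Build $G_2=(V_2,E_2)$ from $G_1$ by deleting $V_{\mathcal P}$ and incident edges (so $V_2=V_{sw}$, $E_2=E_1\cap E_0$), with residual capacities $\bar g(e)=g(e)-\sum_t f_t(e)$ from the Step 1 solution. Form commodities for Step 2 whose sources lie in $V_{sw\rightarrow pm}$ and whose destinations lie in $V_T$: for each Step 1 tree carrying class-$c$ traffic from source $s$ through switch $v\in V_{sw\rightarrow pm}$, that traffic is split among the destinations $t$ of class-$c$ commodities with source $s$ in proportion to their demands, and becomes demand from $v$ to $t$; let $d_t(v)$ be the resulting total demand from $v$ to $t\in V_T$. Compute a basic feasible solution of the LP: minimize $\sum_{e\in E_2,t\in V_T}f_t(e)$ subject to flow conservation $\sum_{(v,w)\in E_2}f_t(v,w)-\sum_{(u,v)\in E_2}f_t(u,v)=d_t(v)$ for all $t\in V_T$, $v\in V_2$, $v\neq t$; $\sum_{t\in V_T}f_t(e)\le\bar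 g(e)$ for all $e\in E_2$; $f_t(e)\ge 0$. Then apply Flow2Trees$(t)$ for every $t\in V_T$. Flow2Trees$(t)$, given a graph, a root $t$ and a flow $f_t$ to $t$: while some source $s$ still has positive residual demand to $t$, construct, using only edges $e$ with $f_t(e)>0$, a multipoint-to-point tree $R$ (a tree with all edges oriented toward the root $t$) spanning all sources with residual demand to $t$, move as much flow as possible onto $R$ (i.e. route amounts from the sources along their paths in $R$, subtracting them from the residual demands and from $f_t$ on the edges used, keeping everything nonnegative, and maximizing the amount moved), and output $R$. Assume both LPs are feasible. Then the total number of multipoint-to-point trees produced by the algorithm (over both steps) is at most $C+2|E_0|+|V_T|-2|V_{pm}|$.
   Context: A multipoint-to-point tree rooted at a node $t$ is a directed tree in which every edge is oriented toward $t$; it is used to carry traffic from several sources to the single destination $t$. A basic feasible solution of an LP is a vertex of its feasible polyhedron. $|A|$ denotes the cardinality of a set $A$. *)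

theory Defs
  imports Complex_Main
begin

text \<open>Nodes of the Step-1 graph: switches (Sw v) and the new class nodes (Pn k), k = 1..C.\<close>
datatype 'v node1 = Sw 'v | Pn nat

definition swpm :: "'v set \<Rightarrow> 'v set \<Rightarrow> ('v \<times> 'v) set \<Rightarrow> 'v set" where
  "swpm Vsw Vpm E0 = {v \<in> Vsw. \<exists>u\<in>Vpm. (v, u) \<in> E0}"

definition hat :: "'v set \<Rightarrow> ('v \<times> 'v) set \<Rightarrow> 'v \<Rightarrow> 'v" where
  "hat Vpm E0 v = (THE u. u \<in> Vpm \<and> (v, u) \<in> E0)"

definition network ::
  "'v set \<Rightarrow> 'v set \<Rightarrow> ('v \<times> 'v) set \<Rightarrow> ('v \<times> 'v \<Rightarrow> real) \<Rightarrow> ('v \<Rightarrow> real) \<Rightarrow> bool" where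
  "network Vsw Vpm E0 g b \<longleftrightarrow>
     finite Vsw \<and> finite Vpm \<and> Vsw \<inter> Vpm = {} \<and>
     E0 \<subseteq> (Vsw \<union> Vpm) \<times> (Vsw \<union> Vpm) \<and>
     (\<forall>u\<in>Vpm. \<exists>v\<in>Vsw. {e \<in> E0. fst e = u \<or> snd e = u} = {(u, v), (v, u)}) \<and>
     (\<forall>v\<in>Vsw. card {u \<in> Vpm. (v, u) \<in> E0 \<or> (u, v) \<in> E0} \<le> 1) \<and>
     (\<forall>e\<in>E0. 0 \<le> g e) \<and> (\<forall>u\<in>Vpm. 0 \<le> b u)"

definition commodities ::
  "'v set \<Rightarrow> nat \<Rightarrow> (nat \<Rightarrow> 'v) \<Rightarrow> (nat \<Rightarrow> 'v) \<Rightarrow> (nat \<Rightarrow> real) \<Rightarrow> (nat \<Rightarrow> nat) \<Rightarrow> nat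
     \<Rightarrow> (nat \<Rightarrow> real) \<Rightarrow> bool" where
  "commodities Vsw M src dst dem cl C p \<longleftrightarrow>
     (\<forall>i\<in>{1..M}. src i \<in> Vsw \<and> dst i \<in> Vsw \<and> 0 < dem i \<and> cl i \<in> {1..C}) \<and>
     cl ` {1..M} = {1..C} \<and> (\<forall>k\<in>{1..C}. 0 < p k)"

definition E2 :: "'v set \<Rightarrow> ('v \<times> 'v) set \<Rightarrow> ('v \<times> 'v) set" where
  "E2 Vsw E0 = {e \<in> E0. fst e \<in> Vsw \<and> snd e \<in> Vsw}"

definition V1 :: "'v set \<Rightarrow> nat \<Rightarrow> 'v node1 set" where
  "V1 Vsw C = Sw ` Vsw \<union> Pn ` {1..C}"

definition E1 :: "'v set \<Rightarrow> 'v set \<Rightarrow> ('v \<times> 'v) set \<Rightarrow> nat \<Rightarrow> ('v node1 \<times> 'v node1) set" where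
  "E1 Vsw Vpm E0 C = (\<lambda>(u, w). (Sw u, Sw w)) ` E2 Vsw E0
      \<union> {(Sw v, Pn k) | v k. v \<in> swpm Vsw Vpm E0 \<and> k \<in> {1..C}}"

fun d1 :: "nat \<Rightarrow> (nat \<Rightarrow> 'v) \<Rightarrow> (nat \<Rightarrow> real) \<Rightarrow> (nat \<Rightarrow> nat) \<Rightarrow> 'v node1 \<Rightarrow> 'v node1 \<Rightarrow> real" where
  "d1 M src dem cl (Pn k) (Sw w) = (\<Sum>i\<in>{i\<in>{1..M}. cl i = k \<and> src i = w}. dem i)"
| "d1 M src dem cl _ _ = 0"

definition conservation ::
  "'n set \<Rightarrow> ('n \<times> 'n) set \<Rightarrow> 'n set \<Rightarrow> ('n \<Rightarrow> 'n \<Rightarrow> real) \<Rightarrow> ('n \<Rightarrow> 'n \<times> 'n \<Rightarrow> real) \<Rightarrow> bool" where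
  "conservation V E T d f \<longleftrightarrow>
     (\<forall>t\<in>T. \<forall>v\<in>V. v \<noteq> t \<longrightarrow>
        (\<Sum>w\<in>{w. (v, w) \<in> E}. f t (v, w)) - (\<Sum>u\<in>{u. (u, v) \<in> E}. f t (u, v)) = d t v)"

text \<open>Feasible polyhedron of the Step-1 LP (variables f t e for t in V_P, e in E_1;
  all other coordinates are fixed to 0).\<close>
definition lp1_set ::
  "'v set \<Rightarrow> 'v set \<Rightarrow> ('v \<times> 'v) set \<Rightarrow> ('v \<times> 'v \<Rightarrow> real) \<Rightarrow> ('v \<Rightarrow> real) \<Rightarrow> nat \<Rightarrow> (nat \<Rightarrow> 'v)
     \<Rightarrow> (nat \<Rightarrow> real) \<Rightarrow> (nat \<Rightarrow> nat) \<Rightarrow> nat \<Rightarrow> (nat \<Rightarrow> real)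
     \<Rightarrow> ('v node1 \<Rightarrow> 'v node1 \<times> 'v node1 \<Rightarrow> real) set" where
  "lp1_set Vsw Vpm E0 g b M src dem cl C p =
     {f. (\<forall>t e. (t \<notin> Pn ` {1..C} \<or> e \<notin> E1 Vsw Vpm E0 C) \<longrightarrow> f t e = 0)
       \<and> conservation (V1 Vsw C) (E1 Vsw Vpm E0 C) (Pn ` {1..C}) (d1 M src dem cl) f
       \<and> (\<forall>e\<in>E2 Vsw E0. (\<Sum>t\<in>Pn ` {1..C}. f t (Sw (fst e), Sw (snd e))) \<le> g e)
       \<and> (\<forall>v\<in>swpm Vsw Vpm E0. (\<Sum>k\<in>{1..C}. f (Pn k) (Sw v, Pn k))
             \<le> min (g (v, hat Vpm E0 v)) (g (hat Vpm E0 v, v)))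
       \<and> (\<forall>v\<in>swpm Vsw Vpm E0. (\<Sum>k\<in>{1..C}. p k * f (Pn k) (Sw v, Pn k)) \<le> b (hat Vpm E0 v))
       \<and> (\<forall>t e. 0 \<le> f t e)}"

definition lp2_set ::
  "'v set \<Rightarrow> ('v \<times> 'v) set \<Rightarrow> 'v set \<Rightarrow> ('v \<Rightarrow> 'v \<Rightarrow> real) \<Rightarrow> ('v \<times> 'v \<Rightarrow> real)
     \<Rightarrow> ('v \<Rightarrow> 'v \<times> 'v \<Rightarrow> real) set" where
  "lp2_set V E T d gbar =
     {f. (\<forall>t e. (t \<notin> T \<or> e \<notin> E) \<longrightarrow> f t e = 0)
       \<and> conservation V E T d f
       \<and> (\<forall>e\<in>E. (\<Sum>t\<in>T. f t e) \<le> gbar e)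
       \<and> (\<forall>t e. 0 \<le> f t e)}"

text \<open>Basic feasible solution = vertex (extreme point) of the feasible polyhedron.\<close>
definition is_vertex :: "('a \<Rightarrow> 'b \<Rightarrow> real) set \<Rightarrow> ('a \<Rightarrow> 'b \<Rightarrow> real) \<Rightarrow> bool" where
  "is_vertex P f \<longleftrightarrow> f \<in> P \<and>
     (\<forall>g\<in>P. \<forall>h\<in>P. \<forall>u::real. 0 < u \<and> u < 1 \<and> f = (\<lambda>t e. u * g t e + (1 - u) * h t e) \<longrightarrow> g = h)"

definition mp_tree :: "('n \<times> 'n) set \<Rightarrow> 'n \<Rightarrow> ('n \<times> 'n) set \<Rightarrow> bool" where
  "mp_tree E t R \<longleftrightarrow> R \<subseteq> E \<and> finite R \<and>
     (\<forall>(u, w)\<in>R. u \<noteq> t) \<and>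
     (\<forall>u w w'. (u, w) \<in> R \<longrightarrow> (u, w') \<in> R \<longrightarrow> w = w') \<and>
     (\<forall>(u, w)\<in>R. (u, t) \<in> trancl R)"

definition srcs :: "'n set \<Rightarrow> 'n \<Rightarrow> ('n \<Rightarrow> real) \<Rightarrow> 'n set" where
  "srcs V t r = {v \<in> V. v \<noteq> t \<and> 0 < r v}"

text \<open>Amount placed on tree edge e when each source s sends a s along its path in R.\<close>
definition tree_load :: "('n \<times> 'n) set \<Rightarrow> 'n set \<Rightarrow> ('n \<Rightarrow> real) \<Rightarrow> 'n \<times> 'n \<Rightarrow> real" where
  "tree_load R S a e = (\<Sum>s\<in>S. if (s, fst e) \<in> rtrancl R then a s else 0)"

definition routing_ok ::
  "('n \<times> 'n) set \<Rightarrow> 'n set \<Rightarrow> ('n \<times> 'n \<Rightarrow> real) \<Rightarrow> ('n \<Rightarrow> real) \<Rightarrow> ('n \<Rightarrow> real) \<Rightarrow> bool" where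
  "routing_ok R S f r a \<longleftrightarrow> (\<forall>s\<in>S. 0 \<le> a s \<and> a s \<le> r s) \<and> (\<forall>s. s \<notin> S \<longrightarrow> a s = 0)
     \<and> (\<forall>e\<in>R. tree_load R S a e \<le> f e)"

definition max_routing ::
  "('n \<times> 'n) set \<Rightarrow> 'n set \<Rightarrow> ('n \<times> 'n \<Rightarrow> real) \<Rightarrow> ('n \<Rightarrow> real) \<Rightarrow> ('n \<Rightarrow> real) \<Rightarrow> bool" where
  "max_routing R S f r a \<longleftrightarrow> routing_ok R S f r a \<and>
     (\<forall>a'. routing_ok R S f r a' \<longrightarrow> sum a' S \<le> sum a S)"

text \<open>flow2trees V E t f r out: a complete run of Flow2Trees(t) on graph (V,E) starting
  from flow f and residual demands r, outputting the list of trees together with the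
  amounts routed on each.\<close>
inductive flow2trees ::
  "'n set \<Rightarrow> ('n \<times> 'n) set \<Rightarrow> 'n \<Rightarrow> ('n \<times> 'n \<Rightarrow> real) \<Rightarrow> ('n \<Rightarrow> real)
     \<Rightarrow> (('n \<times> 'n) set \<times> ('n \<Rightarrow> real)) list \<Rightarrow> bool"
  for V E t where
  stop: "srcs V t r = {} \<Longrightarrow> flow2trees V E t f r []"
| step: "srcs V t r \<noteq> {} \<Longrightarrow> mp_tree E t R \<Longrightarrow> R \<subseteq> {e. 0 < f e} \<Longrightarrow>
         (\<forall>s\<in>srcs V t r. (s, t) \<in> trancl R) \<Longrightarrow>
         max_routing R (srcs V t r) f r a \<Longrightarrow>
         flow2trees V E t (\<lambda>e. if e \<in> R then f e - tree_load R (srcs V t r) a e else f e)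
                          (\<lambda>v. r v - a v) rest \<Longrightarrow>
         flow2trees V E t f r ((R, a) # rest)"

definition gbar :: "'v set \<Rightarrow> nat \<Rightarrow> ('v \<times> 'v \<Rightarrow> real) \<Rightarrow> ('v node1 \<Rightarrow> 'v node1 \<times> 'v node1 \<Rightarrow> real)
     \<Rightarrow> 'v \<times> 'v \<Rightarrow> real" where
  "gbar Vsw C g f1 e = g e - (\<Sum>t\<in>Pn ` {1..C}. f1 t (Sw (fst e), Sw (snd e)))"

definition Dcst :: "nat \<Rightarrow> (nat \<Rightarrow> 'v) \<Rightarrow> (nat \<Rightarrow> 'v) \<Rightarrow> (nat \<Rightarrow> real) \<Rightarrow> (nat \<Rightarrow> nat)
     \<Rightarrow> nat \<Rightarrow> 'v \<Rightarrow> 'v \<Rightarrow> real" where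
  "Dcst M src dst dem cl k s t = (\<Sum>i\<in>{i\<in>{1..M}. cl i = k \<and> src i = s \<and> dst i = t}. dem i)"

definition Dcs :: "nat \<Rightarrow> (nat \<Rightarrow> 'v) \<Rightarrow> (nat \<Rightarrow> real) \<Rightarrow> (nat \<Rightarrow> nat) \<Rightarrow> nat \<Rightarrow> 'v \<Rightarrow> real" where
  "Dcs M src dem cl k s = (\<Sum>i\<in>{i\<in>{1..M}. cl i = k \<and> src i = s}. dem i)"

text \<open>Step-2 demand d2 t v from switch v to destination t: class-k traffic from source s
  leaving through v (last hop (v, Pn k)) in a Step-1 tree is split among destinations in
  proportion to the class-k demands from s.\<close>
definition d2 :: "'v set \<Rightarrow> nat \<Rightarrow> (nat \<Rightarrow> 'v) \<Rightarrow> (nat \<Rightarrow> 'v) \<Rightarrow> (nat \<Rightarrow> real) \<Rightarrow> (nat \<Rightarrow> nat)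
     \<Rightarrow> nat \<Rightarrow> (nat \<Rightarrow> (('v node1 \<times> 'v node1) set \<times> ('v node1 \<Rightarrow> real)) list)
     \<Rightarrow> 'v \<Rightarrow> 'v \<Rightarrow> real" where
  "d2 Vsw M src dst dem cl C runs1 t v =
     (\<Sum>k\<in>{1..C}. sum_list (map (\<lambda>(R, a).
        (\<Sum>s\<in>Vsw. if (Sw s, Sw v) \<in> rtrancl R \<and> (Sw v, Pn k) \<in> R
                   then a (Sw s) * Dcst M src dst dem cl k s t / Dcs M src dem cl k s else 0))
        (runs1 k)))"

end

theory Submission
  imports Defs
begin

text \<open>A run of Flow2Trees(t) that outputs n trees yields n - 1 linearly independent
  circulations supported on the support of f_t: a maximal routing on each tree but the last
  saturates one of its edges, and the remaining flow minus the remaining demand routed on that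
  tree is a circulation that is negative on the saturated edge, which the later circulations
  avoid. At a vertex of an LP with the constraints of a multicommodity flow, no nonzero
  combination of these circulations can lie in the kernel of all coupling constraints, for
  otherwise the vertex could be moved along it in both directions. Hence the number of trees
  is at most the number of coupling constraints plus the number of roots: |E_2| + 2|V_sw->pm| + C
  in Step 1 and |E_2| + |V_T| in Step 2, and |E_2| + |V_sw->pm| + |V_pm| <= |E_0|.\<close>

section \<open>Linear independence\<close>

lemma exists_nontrivial_vanishing_combination:
  fixes u :: "'j \<Rightarrow> 'x \<Rightarrow> real"
  assumes "finite X" "finite J" "card X < card J"
  shows "\<exists>c. (\<forall>x\<in>X. (\<Sum>j\<in>J. c j * u j x) = 0) \<and> (\<exists>j\<in>J. c j \<noteq> 0)"
  using assms
proof (induction X arbitrary: J u rule: finite_induct)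
  case empty
  then have "J \<noteq> {}" by auto
  then show ?case by (intro exI[of _ "\<lambda>_. 1"]) auto
next
  case (insert x X)
  show ?case
  proof (cases "\<forall>j\<in>J. u j x = 0")
    case True
    with insert show ?thesis by auto
  next
    case False
    then obtain j0 where j0: "j0 \<in> J" "u j0 x \<noteq> 0" by blast
    \<comment> \<open>Gaussian elimination: clear the entries in row x using column j0.\<close>
    define u' where "u' j y = u j y - u j x / u j0 x * u j0 y" for j y
    have "finite (J - {j0})" "card X < card (J - {j0})"
      using insert j0 by auto
    from insert.IH[OF this, of u'] obtain c' where
      c': "\<forall>y\<in>X. (\<Sum>j\<in>J - {j0}. c' j * u' j y) = 0" "\<exists>j\<in>J - {j0}. c' j \<noteq> 0" by blast
    define c where "c j = (if j = j0 then - (\<Sum>j\<in>J - {j0}. c' j * u j x) / u j0 x else c' j)" for j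
    have comb: "(\<Sum>j\<in>J. c j * u j y) = (\<Sum>j\<in>J - {j0}. c' j * u' j y)" for y
    proof -
      have "(\<Sum>j\<in>J. c j * u j y) = c j0 * u j0 y + (\<Sum>j\<in>J - {j0}. c' j * u j y)"
        using j0 insert.prems(1) by (simp add: sum.remove c_def)
      also have "\<dots> = (\<Sum>j\<in>J - {j0}. c' j * u' j y)"
        by (simp add: c_def u'_def algebra_simps sum_subtractf sum_distrib_left
            sum_divide_distrib)
      finally show ?thesis .
    qed
    have "(\<Sum>j\<in>J - {j0}. c' j * u' j x) = 0"
      using j0 by (simp add: u'_def)
    with c' comb show ?thesis
      by (intro exI[of _ c]) (auto simp: c_def)
  qed
qed

lemma card_le_if_independent_on:
  fixes u :: "'j \<Rightarrow> 'x \<Rightarrow> real"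
  assumes "finite X" "finite J"
    and "\<forall>c. (\<forall>x\<in>X. (\<Sum>j\<in>J. c j * u j x) = 0) \<longrightarrow> (\<forall>j\<in>J. c j = 0)"
  shows "card J \<le> card X"
  using exists_nontrivial_vanishing_combination[OF assms(1,2), of u] assms(3) by (meson not_le)

definition lincomb :: "(nat \<Rightarrow> real) \<Rightarrow> ('e \<Rightarrow> real) list \<Rightarrow> 'e \<Rightarrow> real" where
  "lincomb c ys e = (\<Sum>i<length ys. c i * (ys ! i) e)"

definition lin_independent :: "('e \<Rightarrow> real) list \<Rightarrow> bool" where
  "lin_independent ys \<longleftrightarrow> (\<forall>c. lincomb c ys = (\<lambda>_. 0) \<longrightarrow> (\<forall>i<length ys. c i = 0))"

lemma lin_independent_Nil: "lin_independent []"
  by (simp add: lin_independent_def)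

lemma lincomb_Cons: "lincomb c (y # ys) e = c 0 * y e + lincomb (\<lambda>i. c (Suc i)) ys e"
  by (simp add: lincomb_def sum.lessThan_Suc_shift del: sum.lessThan_Suc)

lemma lin_independent_Cons:
  assumes "lin_independent ys" "y e0 \<noteq> 0" "\<forall>y'\<in>set ys. y' e0 = 0"
  shows "lin_independent (y # ys)"
  unfolding lin_independent_def
proof (rule allI, rule impI)
  fix c assume zero: "lincomb c (y # ys) = (\<lambda>_. 0)"
  have "lincomb (\<lambda>i. c (Suc i)) ys e0 = 0"
    using assms(3) nth_mem by (fastforce simp: lincomb_def intro!: sum.neutral)
  with zero assms(2) have "c 0 = 0"
    by (metis add.right_neutral lincomb_Cons mult_eq_0_iff)
  with zero have "lincomb (\<lambda>i. c (Suc i)) ys = (\<lambda>_. 0)"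
    by (metis (no_types) add_0 lincomb_Cons mult_zero_left)
  with assms(1) \<open>c 0 = 0\<close> show "\<forall>i<length (y # ys). c i = 0"
    by (auto simp: lin_independent_def less_Suc_eq_0_disj)
qed

lemma lincomb_neq_zero_imp:
  assumes "lincomb c ys e \<noteq> 0"
  shows "\<exists>i<length ys. (ys ! i) e \<noteq> 0"
proof -
  obtain i where "i \<in> {..<length ys}" "c i * (ys ! i) e \<noteq> 0"
    using assms unfolding lincomb_def by (rule sum.not_neutral_contains_not_neutral)
  then show ?thesis
    by auto
qed

lemma sum_Sigma_lincomb:
  assumes "finite T"
  shows "(\<Sum>j\<in>Sigma T (\<lambda>t. {..<length (ys t)}). c j * (\<Sum>e\<in>E. w (fst j) e * (ys (fst j) ! snd j) e))
    = (\<Sum>t\<in>T. \<Sum>e\<in>E. w t e * lincomb (\<lambda>i. c (t, i)) (ys t) e)"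
proof -
  have "(\<Sum>j\<in>Sigma T (\<lambda>t. {..<length (ys t)}). c j * (\<Sum>e\<in>E. w (fst j) e * (ys (fst j) ! snd j) e))
      = (\<Sum>t\<in>T. \<Sum>i<length (ys t). \<Sum>e\<in>E. c (t, i) * (w t e * (ys t ! i) e))"
    using assms by (simp add: sum.Sigma sum_distrib_left split_def)
  also have "\<dots> = (\<Sum>t\<in>T. \<Sum>e\<in>E. w t e * lincomb (\<lambda>i. c (t, i)) (ys t) e)"
    by (intro sum.cong refl)
      (simp add: lincomb_def sum_distrib_left sum.swap[of _ "{..<_}"] algebra_simps)
  finally show ?thesis .
qed

section \<open>Flows and circulations\<close>

definition netflow :: "('n \<times> 'n) set \<Rightarrow> ('n \<times> 'n \<Rightarrow> real) \<Rightarrow> 'n \<Rightarrow> real" where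
  "netflow E f v = (\<Sum>w\<in>{w. (v, w) \<in> E}. f (v, w)) - (\<Sum>u\<in>{u. (u, v) \<in> E}. f (u, v))"

definition flow_to ::
  "'n set \<Rightarrow> ('n \<times> 'n) set \<Rightarrow> 'n \<Rightarrow> ('n \<Rightarrow> real) \<Rightarrow> ('n \<times> 'n \<Rightarrow> real) \<Rightarrow> bool" where
  "flow_to V E t d f \<longleftrightarrow> (\<forall>v\<in>V. v \<noteq> t \<longrightarrow> netflow E f v = d v)"

lemma conservation_iff_flow_to: "conservation V E T d f \<longleftrightarrow> (\<forall>t\<in>T. flow_to V E t (d t) (f t))"
  by (simp add: conservation_def flow_to_def netflow_def)

lemma netflow_diff: "netflow E (\<lambda>e. f e - g e) v = netflow E f v - netflow E g v"
  by (simp add: netflow_def sum_subtractf)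

lemma netflow_add_scaled: "netflow E (\<lambda>e. f e + c * g e) v = netflow E f v + c * netflow E g v"
  by (simp add: netflow_def sum.distrib sum_distrib_left algebra_simps)

lemma flow_to_diff:
  "flow_to V E t d f \<Longrightarrow> flow_to V E t d' g \<Longrightarrow> flow_to V E t (\<lambda>v. d v - d' v) (\<lambda>e. f e - g e)"
  by (simp add: flow_to_def netflow_diff)

lemma flow_to_add_circulation:
  "flow_to V E t d f \<Longrightarrow> flow_to V E t (\<lambda>_. 0) z \<Longrightarrow> flow_to V E t d (\<lambda>e. f e + c * z e)"
  by (simp add: flow_to_def netflow_add_scaled)

lemma netflow_lincomb: "netflow E (lincomb c ys) v = (\<Sum>i<length ys. c i * netflow E (ys ! i) v)"
  unfolding netflow_def lincomb_def
  by (simp add: sum.swap[of _ "{..<length ys}"] sum_distrib_left right_diff_distrib sum_subtractf)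

lemma flow_to_lincomb:
  "\<forall>y\<in>set ys. flow_to V E t (\<lambda>_. 0) y \<Longrightarrow> flow_to V E t (\<lambda>_. 0) (lincomb c ys)"
  by (simp add: flow_to_def netflow_lincomb)

section \<open>Multipoint-to-point trees\<close>

locale mp_tree_at =
  fixes E :: "('n \<times> 'n) set" and t :: 'n and R :: "('n \<times> 'n) set"
  assumes mp_tree: "mp_tree E t R"
begin

lemma tree_subset: "R \<subseteq> E"
  and root_no_out_edge: "(t, w) \<notin> R"
  and tail_reaches_root: "(u, w) \<in> R \<Longrightarrow> (u, t) \<in> R\<^sup>+"
  using mp_tree unfolding mp_tree_def by auto

lemma tree_single_valued: "single_valued R"
  using mp_tree unfolding mp_tree_def single_valued_def by blast

lemma reached_from_root: "(t, v) \<in> R\<^sup>* \<Longrightarrow> v = t"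
  using root_no_out_edge by (auto elim: converse_rtranclE)

lemma reaches_root:
  assumes "(u, v) \<in> R\<^sup>+"
  shows "(v, t) \<in> R\<^sup>*"
proof -
  obtain w where w: "(u, w) \<in> R" "(w, v) \<in> R\<^sup>*"
    using assms by (auto dest: tranclD)
  obtain w' where "(u, w') \<in> R" "(w', t) \<in> R\<^sup>*"
    using tranclD[OF tail_reaches_root[OF w(1)]] by blast
  with w tree_single_valued have "(w, t) \<in> R\<^sup>*"
    by (auto dest: single_valuedD)
  then show ?thesis
    using single_valued_confluent[OF tree_single_valued w(2)] reached_from_root by blast
qed

lemma tree_acyclic: "acyclic R"
proof (rule acyclicI, intro allI notI)
  fix x assume cycle: "(x, x) \<in> R\<^sup>+"
  \<comment> \<open>Since R is single-valued, everything reachable from a node on a cycle lies on that cycle.\<close>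
  have cycle_closed: "(y, x) \<in> R\<^sup>*" if "(x, y) \<in> R\<^sup>*" for y
    using that
  proof (induction rule: rtrancl_induct)
    case (step y z)
    then have "(y, x) \<in> R\<^sup>+"
      using cycle by (auto simp: rtrancl_eq_or_trancl)
    then obtain z' where "(y, z') \<in> R" "(z', x) \<in> R\<^sup>*"
      by (blast dest: tranclD)
    with step.hyps(2) tree_single_valued show ?case
      by (auto dest: single_valuedD)
  qed simp
  have "(x, t) \<in> R\<^sup>*"
    using cycle reaches_root by blast
  then have "(t, x) \<in> R\<^sup>*"
    using cycle_closed by blast
  then have "x = t"
    by (rule reached_from_root)
  with cycle root_no_out_edge show False
    by (auto elim: converse_tranclE)
qed

lemma in_neighbours_eq_if_reach:
  assumes "(u1, v) \<in> R" "(u2, v) \<in> R" "(u1, u2) \<in> R\<^sup>*"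
  shows "u1 = u2"
proof (rule ccontr)
  assume "u1 \<noteq> u2"
  with assms(3) obtain w where "(u1, w) \<in> R" "(w, u2) \<in> R\<^sup>*"
    by (auto elim: converse_rtranclE)
  with assms(1) tree_single_valued have "(v, u2) \<in> R\<^sup>*"
    by (auto dest: single_valuedD)
  with assms(2) have "(v, v) \<in> R\<^sup>+"
    by auto
  with tree_acyclic show False
    by (simp add: acyclic_def)
qed

lemma card_in_neighbours_reached_from:
  "card {u. (u, v) \<in> R \<and> (s, u) \<in> R\<^sup>*} = (if (s, v) \<in> R\<^sup>+ then 1 else 0)"
proof (cases "(s, v) \<in> R\<^sup>+")
  case True
  then obtain u where u: "(s, u) \<in> R\<^sup>*" "(u, v) \<in> R"
    by (meson tranclD2)
  have "{u. (u, v) \<in> R \<and> (s, u) \<in> R\<^sup>*} = {u}"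
    using u single_valued_confluent[OF tree_single_valued u(1)] in_neighbours_eq_if_reach[OF u(2)]
      in_neighbours_eq_if_reach[of _ v u] u(2)
    by blast
  with True show ?thesis
    by simp
next
  case False
  then have "{u. (u, v) \<in> R \<and> (s, u) \<in> R\<^sup>*} = {}"
    by (auto intro: rtrancl_into_trancl1)
  with False show ?thesis
    by (simp only: card.empty if_False)
qed

end

definition tree_flow :: "('n \<times> 'n) set \<Rightarrow> 'n set \<Rightarrow> ('n \<Rightarrow> real) \<Rightarrow> 'n \<times> 'n \<Rightarrow> real" where
  "tree_flow R S a e = (if e \<in> R then tree_load R S a e else 0)"

lemma finite_out_neighbours: "finite E \<Longrightarrow> finite {w. (v, w) \<in> E}"
  by (rule finite_subset[of _ "snd ` E"]) force+

lemma finite_in_neighbours: "finite E \<Longrightarrow> finite {u. (u, v) \<in> E}"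
  by (rule finite_subset[of _ "fst ` E"]) force+

context mp_tree_at
begin

lemma inflow_tree_flow:
  assumes "finite E"
  shows "(\<Sum>u\<in>{u. (u, v) \<in> E}. tree_flow R S a (u, v)) = (\<Sum>s\<in>S. if (s, v) \<in> R\<^sup>+ then a s else 0)"
proof -
  have "(\<Sum>u\<in>{u. (u, v) \<in> E}. tree_flow R S a (u, v))
      = (\<Sum>u\<in>{u. (u, v) \<in> E}. \<Sum>s\<in>S. if (u, v) \<in> R \<and> (s, u) \<in> R\<^sup>* then a s else 0)"
    by (intro sum.cong refl) (simp add: tree_flow_def tree_load_def)
  also have "\<dots> = (\<Sum>s\<in>S. \<Sum>u\<in>{u. (u, v) \<in> E}. if (u, v) \<in> R \<and> (s, u) \<in> R\<^sup>* then a s else 0)"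
    by (rule sum.swap)
  also have "\<dots> = (\<Sum>s\<in>S. real (card {u. (u, v) \<in> R \<and> (s, u) \<in> R\<^sup>*}) * a s)"
  proof (intro sum.cong refl)
    fix s
    have "{u \<in> {u. (u, v) \<in> E}. (u, v) \<in> R \<and> (s, u) \<in> R\<^sup>*} = {u. (u, v) \<in> R \<and> (s, u) \<in> R\<^sup>*}"
      using tree_subset by blast
    then show "(\<Sum>u\<in>{u. (u, v) \<in> E}. if (u, v) \<in> R \<and> (s, u) \<in> R\<^sup>* then a s else 0)
        = real (card {u. (u, v) \<in> R \<and> (s, u) \<in> R\<^sup>*}) * a s"
      using finite_in_neighbours[OF assms] by (simp add: sum.inter_filter[symmetric])
  qed
  also have "\<dots> = (\<Sum>s\<in>S. if (s, v) \<in> R\<^sup>+ then a s else 0)"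
    by (intro sum.cong refl) (simp add: card_in_neighbours_reached_from)
  finally show ?thesis .
qed

lemma netflow_tree_flow:
  assumes "finite E" "finite S" and S_reach: "\<forall>s\<in>S. (s, t) \<in> R\<^sup>+" and "v \<noteq> t"
  shows "netflow E (tree_flow R S a) v = (if v \<in> S then a v else 0)"
proof (cases "\<exists>w0. (v, w0) \<in> R")
  case True
  then obtain w0 where w0: "(v, w0) \<in> R" ..
  define A where "A = (\<Sum>s\<in>S. if (s, v) \<in> R\<^sup>* then a s else 0)"
  have "tree_flow R S a (v, w) = (if w = w0 then A else 0)" for w
    using w0 tree_single_valued by (auto simp: tree_flow_def tree_load_def A_def dest: single_valuedD)
  moreover have "w0 \<in> {w. (v, w) \<in> E}"
    using w0 tree_subset by auto
  ultimately have "(\<Sum>w\<in>{w. (v, w) \<in> E}. tree_flow R S a (v, w)) = A"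
    using finite_out_neighbours[OF \<open>finite E\<close>] by (simp add: sum.delta')
  moreover have "A - (\<Sum>s\<in>S. if (s, v) \<in> R\<^sup>+ then a s else 0) = (\<Sum>s\<in>S. if s = v then a s else 0)"
    unfolding A_def sum_subtractf[symmetric] using tree_acyclic
    by (intro sum.cong refl) (auto simp: rtrancl_eq_or_trancl acyclic_def)
  ultimately show ?thesis
    using inflow_tree_flow[OF \<open>finite E\<close>] \<open>finite S\<close> by (simp add: netflow_def sum.delta')
next
  case False
  have "v \<notin> S"
    using S_reach False by (auto elim: converse_tranclE)
  moreover have "(s, v) \<notin> R\<^sup>+" for s
    using reaches_root[of s v] False \<open>v \<noteq> t\<close> by (auto simp: rtrancl_eq_or_trancl elim: converse_tranclE)
  ultimately show ?thesis
    using inflow_tree_flow[OF \<open>finite E\<close>] False by (simp add: netflow_def tree_flow_def)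
qed

lemma flow_to_tree_flow:
  "finite E \<Longrightarrow> finite S \<Longrightarrow> \<forall>s\<in>S. (s, t) \<in> R\<^sup>+ \<Longrightarrow>
    flow_to V E t (\<lambda>v. if v \<in> S then a v else 0) (tree_flow R S a)"
  by (simp add: flow_to_def netflow_tree_flow)

end

section \<open>Flow2Trees\<close>

lemma tree_load_nonneg: "\<forall>s\<in>S. 0 \<le> a s \<Longrightarrow> 0 \<le> tree_load R S a e"
  unfolding tree_load_def by (rule sum_nonneg) auto

lemma tree_load_ge:
  assumes "finite S" "s \<in> S" "(s, fst e) \<in> R\<^sup>*" "\<forall>s\<in>S. 0 \<le> a s"
  shows "a s \<le> tree_load R S a e"
proof -
  have "tree_load R S a e = a s + (\<Sum>s'\<in>S - {s}. if (s', fst e) \<in> R\<^sup>* then a s' else 0)"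
    unfolding tree_load_def using assms(1-3) by (simp add: sum.remove)
  moreover have "0 \<le> (\<Sum>s'\<in>S - {s}. if (s', fst e) \<in> R\<^sup>* then a s' else 0)"
    using assms(4) by (intro sum_nonneg) auto
  ultimately show ?thesis
    by simp
qed

lemma tree_load_increase:
  assumes "finite S" "s \<in> S"
  shows "tree_load R S (a(s := a s + \<delta>)) e = tree_load R S a e + (if (s, fst e) \<in> R\<^sup>* then \<delta> else 0)"
proof -
  have split: "tree_load R S b e = (if (s, fst e) \<in> R\<^sup>* then b s else 0)
      + (\<Sum>s'\<in>S - {s}. if (s', fst e) \<in> R\<^sup>* then b s' else 0)" for b
    unfolding tree_load_def using assms by (simp add: sum.remove)
  have "(\<Sum>s'\<in>S - {s}. if (s', fst e) \<in> R\<^sup>* then (a(s := a s + \<delta>)) s' else 0)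
      = (\<Sum>s'\<in>S - {s}. if (s', fst e) \<in> R\<^sup>* then a s' else 0)"
    by (intro sum.cong) auto
  then show ?thesis
    using split[of a] split[of "a(s := a s + \<delta>)"] by simp
qed

lemma max_routing_saturates:
  assumes "finite S" "finite R" "s \<in> S" "a s < r s" and max: "max_routing R S f r a"
  shows "\<exists>e\<in>R. (s, fst e) \<in> R\<^sup>* \<and> tree_load R S a e = f e"
proof (rule ccontr)
  assume unsaturated: "\<not> ?thesis"
  have ok: "routing_ok R S f r a"
    using max by (simp add: max_routing_def)
  define K where "K = {e\<in>R. (s, fst e) \<in> R\<^sup>*}"
  have slack: "\<forall>e\<in>K. 0 < f e - tree_load R S a e"
    using unsaturated ok by (force simp: K_def routing_ok_def)
  \<comment> \<open>Raising \<open>a s\<close> by the least slack along the path of s keeps the routing feasible.\<close>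
  define \<delta> where "\<delta> = Min (insert (r s - a s) ((\<lambda>e. f e - tree_load R S a e) ` K))"
  have "finite K"
    using assms(2) by (simp add: K_def)
  then have "0 < \<delta>" "\<delta> \<le> r s - a s" "\<forall>e\<in>K. \<delta> \<le> f e - tree_load R S a e"
    using slack assms(4) by (auto simp: \<delta>_def)
  moreover have "tree_load R S (a(s := a s + \<delta>)) e \<le> f e" if "e \<in> R" for e
  proof (cases "(s, fst e) \<in> R\<^sup>*")
    case True
    then have "\<delta> \<le> f e - tree_load R S a e"
      using that \<open>\<forall>e\<in>K. \<delta> \<le> f e - tree_load R S a e\<close> unfolding K_def by blast
    then show ?thesis
      using True assms(1,3) by (simp add: tree_load_increase)
  next
    case False
    then show ?thesis
      using ok that assms(1,3) by (simp add: tree_load_increase routing_ok_def)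
  qed
  ultimately have "routing_ok R S f r (a(s := a s + \<delta>))"
    using ok assms(3) by (auto simp: routing_ok_def)
  then have "sum (a(s := a s + \<delta>)) S \<le> sum a S"
    using max unfolding max_routing_def by blast
  moreover have "sum (a(s := a s + \<delta>)) S = sum a S + \<delta>"
    using assms(1,3) by (simp add: sum.remove)
  ultimately show False
    using \<open>0 < \<delta>\<close> by simp
qed

lemma flow2trees_amounts_nonneg:
  "flow2trees V E t f r runs \<Longrightarrow> (R, a) \<in> set runs \<Longrightarrow> 0 \<le> a x"
proof (induction arbitrary: R a rule: flow2trees.induct)
  case (step r R' f a' rest)
  then show ?case
    by (cases "x \<in> srcs V t r") (auto simp: max_routing_def routing_ok_def)
qed simp

lemma residual_eq_minus_tree_flow:
  "(\<lambda>e. if e \<in> R then f e - tree_load R S a e else f e) = (\<lambda>e. f e - tree_flow R S a e)"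
  by (auto simp: tree_flow_def)

lemma routing_residual_flow:
  assumes "mp_tree E t R" "finite E" "finite S" "\<forall>s\<in>S. (s, t) \<in> R\<^sup>+"
    and ok: "routing_ok R S f r a" and "\<forall>e. 0 \<le> f e" "\<forall>v. 0 \<le> r v" "flow_to V E t r f"
  defines "f' \<equiv> \<lambda>e. if e \<in> R then f e - tree_load R S a e else f e"
  shows "\<forall>e. 0 \<le> f' e \<and> f' e \<le> f e" "\<forall>v. 0 \<le> r v - a v" "flow_to V E t (\<lambda>v. r v - a v) f'"
proof -
  interpret mp_tree_at E t R
    by (rule mp_tree_at.intro) fact
  have a: "\<forall>s\<in>S. 0 \<le> a s \<and> a s \<le> r s" "\<forall>v. v \<notin> S \<longrightarrow> a v = 0"
    using ok by (auto simp: routing_ok_def)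
  show "\<forall>e. 0 \<le> f' e \<and> f' e \<le> f e"
    using ok assms(6) tree_load_nonneg[of S a R] a
    by (auto simp: f'_def routing_ok_def)
  show "\<forall>v. 0 \<le> r v - a v"
    using a assms(7) by (metis diff_ge_0_iff_ge diff_zero)
  have "flow_to V E t (\<lambda>v. r v - (if v \<in> S then a v else 0)) f'"
    unfolding f'_def residual_eq_minus_tree_flow by (intro flow_to_diff assms flow_to_tree_flow)
  moreover have "(\<lambda>v. r v - (if v \<in> S then a v else 0)) = (\<lambda>v. r v - a v)"
    using a by auto
  ultimately show "flow_to V E t (\<lambda>v. r v - a v) f'"
    by simp
qed

lemma (in mp_tree_at) rerouting_circulation:
  assumes "finite E" "finite S" "\<forall>s\<in>S. (s, t) \<in> R\<^sup>+" "flow_to V E t r f"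
    and "\<forall>v\<in>V. v \<noteq> t \<longrightarrow> v \<notin> S \<longrightarrow> r v = 0"
  shows "flow_to V E t (\<lambda>_. 0) (\<lambda>e. f e - tree_flow R S r e)"
proof -
  have "flow_to V E t (\<lambda>v. r v - (if v \<in> S then r v else 0)) (\<lambda>e. f e - tree_flow R S r e)"
    by (intro flow_to_diff flow_to_tree_flow assms)
  then show ?thesis
    using assms(5) by (simp add: flow_to_def)
qed

lemma (in mp_tree_at) saturated_edge_circulation:
  assumes "finite V" "finite E" "finite S" "S = srcs V t r" "R \<subseteq> {e. 0 < f e}"
    and reach: "\<forall>s\<in>S. (s, t) \<in> R\<^sup>+" and max: "max_routing R S f r a"
    and "\<forall>e. 0 \<le> f e" "\<forall>v. 0 \<le> r v" "flow_to V E t r f"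
    and unsatisfied: "srcs V t (\<lambda>v. r v - a v) \<noteq> {}"
  defines "f' \<equiv> \<lambda>e. if e \<in> R then f e - tree_load R S a e else f e"
  shows "\<exists>y e0. flow_to V E t (\<lambda>_. 0) y \<and> y e0 < 0 \<and> f' e0 = 0 \<and> (\<forall>e. y e \<noteq> 0 \<longrightarrow> 0 < f e)"
proof -
  define r' where "r' = (\<lambda>v. r v - a v)"
  have ok: "routing_ok R S f r a"
    using max by (simp add: max_routing_def)
  note residual = routing_residual_flow[OF mp_tree \<open>finite E\<close> \<open>finite S\<close> reach ok assms(8-10),
      folded f'_def r'_def]
  have a_outside: "v \<notin> S \<Longrightarrow> a v = 0" for v
    using ok by (simp add: routing_ok_def)
  obtain s where s: "s \<in> srcs V t r'"
    using unsatisfied by (auto simp: r'_def)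
  then have "s \<in> S" "a s < r s"
    using a_outside[of s] \<open>S = srcs V t r\<close> by (auto simp: srcs_def r'_def)
  moreover have "finite R"
    using mp_tree by (simp add: mp_tree_def)
  ultimately obtain e0 where e0: "e0 \<in> R" "(s, fst e0) \<in> R\<^sup>*" "tree_load R S a e0 = f e0"
    using max_routing_saturates[OF \<open>finite S\<close> _ _ _ max] by blast
  define y where "y = (\<lambda>e. f' e - tree_flow R S r' e)"
  have "\<forall>v\<in>V. v \<noteq> t \<longrightarrow> v \<notin> S \<longrightarrow> r' v = 0"
    using assms(9) a_outside \<open>S = srcs V t r\<close> by (auto simp: srcs_def r'_def intro: antisym)
  then have "flow_to V E t (\<lambda>_. 0) y"
    unfolding y_def by (intro rerouting_circulation residual(3) \<open>finite E\<close> \<open>finite S\<close> reach)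
  moreover have "r' s \<le> tree_flow R S r' e0"
    using tree_load_ge[OF \<open>finite S\<close> \<open>s \<in> S\<close> e0(2), of r'] residual(2) e0(1)
    by (simp add: tree_flow_def r'_def)
  then have "y e0 < 0"
    using s e0 by (simp add: y_def f'_def srcs_def)
  moreover have "f' e0 = 0"
    using e0 by (simp add: f'_def)
  moreover have "\<forall>e. y e \<noteq> 0 \<longrightarrow> 0 < f e"
  proof (intro allI impI)
    fix e assume "y e \<noteq> 0"
    show "0 < f e"
    proof (cases "e \<in> R")
      case True
      with \<open>R \<subseteq> {e. 0 < f e}\<close> show ?thesis
        by blast
    next
      case False
      then have "f e \<noteq> 0"
        using \<open>y e \<noteq> 0\<close> by (simp add: y_def f'_def tree_flow_def)
      with assms(8) show ?thesis
        by (metis order_le_less)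
    qed
  qed
  ultimately show ?thesis
    by blast
qed

lemma flow2trees_circulations:
  assumes "flow2trees V E t f r runs" "finite V" "finite E"
    and "\<forall>e. 0 \<le> f e" "\<forall>v. 0 \<le> r v" "flow_to V E t r f"
  shows "\<exists>ys. length runs \<le> Suc (length ys) \<and> lin_independent ys
    \<and> (\<forall>y\<in>set ys. flow_to V E t (\<lambda>_. 0) y \<and> (\<forall>e. y e \<noteq> 0 \<longrightarrow> 0 < f e))"
  using assms
proof (induction rule: flow2trees.induct)
  case (stop r f)
  then show ?case
    by (intro exI[of _ "[]"]) (simp add: lin_independent_Nil)
next
  case (step r R f a rest)
  define S where "S = srcs V t r"
  define f' where "f' = (\<lambda>e. if e \<in> R then f e - tree_load R S a e else f e)"
  have "finite S"
    using \<open>finite V\<close> by (simp add: S_def srcs_def)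
  have tree: "mp_tree E t R" and reach: "\<forall>s\<in>S. (s, t) \<in> R\<^sup>+" and max: "max_routing R S f r a"
    using step.hyps by (simp_all add: S_def)
  then interpret mp_tree_at E t R
    by unfold_locales
  note residual = routing_residual_flow[OF tree \<open>finite E\<close> \<open>finite S\<close> reach
      max[unfolded max_routing_def, THEN conjunct1] step.prems(3-5), folded f'_def]
  have "0 \<le> f' e" "f' e \<le> f e" for e
    using residual(1) unfolding f'_def by blast+
  then have f'_support: "f' e \<noteq> 0 \<Longrightarrow> 0 < f e" for e
    by (metis order_le_less order_less_le_trans)
  obtain ys where ys: "length rest \<le> Suc (length ys)" "lin_independent ys"
    "\<forall>y\<in>set ys. flow_to V E t (\<lambda>_. 0) y \<and> (\<forall>e. y e \<noteq> 0 \<longrightarrow> 0 < f' e)"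
    using step.IH[OF \<open>finite V\<close> \<open>finite E\<close>] residual unfolding f'_def S_def by blast
  show ?case
  proof (cases "rest = []")
    case True
    then show ?thesis
      by (intro exI[of _ "[]"]) (simp add: lin_independent_Nil)
  next
    case False
    with step.hyps(6) have "srcs V t (\<lambda>v. r v - a v) \<noteq> {}"
      by (cases rule: flow2trees.cases) auto
    then obtain y0 e0 where y0: "flow_to V E t (\<lambda>_. 0) y0" "y0 e0 < 0" "f' e0 = 0"
      "\<forall>e. y0 e \<noteq> 0 \<longrightarrow> 0 < f e"
      using saturated_edge_circulation[OF \<open>finite V\<close> \<open>finite E\<close> \<open>finite S\<close> S_def step.hyps(3)
          reach max step.prems(3-5)]
      unfolding f'_def by blast
    have "\<forall>y\<in>set ys. y e0 = 0"
      using ys(3) \<open>f' e0 = 0\<close> by fastforce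
    moreover have "\<forall>y\<in>set ys. \<forall>e. y e \<noteq> 0 \<longrightarrow> 0 < f e"
      using ys(3) f'_support by fastforce
    ultimately show ?thesis
      using ys y0 by (intro exI[of _ "y0 # ys"]) (auto intro!: lin_independent_Cons[of ys y0 e0])
  qed
qed

section \<open>Vertices of multicommodity flow polyhedra\<close>

lemma vertex_perturbation_zero:
  assumes "is_vertex P f" "\<epsilon> \<noteq> 0"
    and "(\<lambda>t e. f t e + \<epsilon> * z t e) \<in> P" "(\<lambda>t e. f t e - \<epsilon> * z t e) \<in> P"
  shows "z = (\<lambda>_ _. 0)"
proof -
  have rigid: "\<forall>g\<in>P. \<forall>h\<in>P. \<forall>u::real.
      0 < u \<and> u < 1 \<and> f = (\<lambda>t e. u * g t e + (1 - u) * h t e) \<longrightarrow> g = h"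
    using assms(1) unfolding is_vertex_def by (rule conjunct2)
  have "f = (\<lambda>t e. 1/2 * (f t e + \<epsilon> * z t e) + (1 - 1/2) * (f t e - \<epsilon> * z t e))"
    by (simp add: algebra_simps)
  then have "(\<lambda>t e. f t e + \<epsilon> * z t e) = (\<lambda>t e. f t e - \<epsilon> * z t e)"
    using rigid[rule_format, OF assms(3,4), of "1/2"] by linarith
  then have "\<forall>t e. \<epsilon> * z t e = 0"
    by (simp add: fun_eq_iff)
  with assms(2) show ?thesis
    by (simp add: fun_eq_iff)
qed

text \<open>The rows in X are the coupling constraints, those that involve several commodities.\<close>
definition mcf_polyhedron ::
  "'n set \<Rightarrow> ('n \<times> 'n) set \<Rightarrow> 'n set \<Rightarrow> ('n \<Rightarrow> 'n \<Rightarrow> real) \<Rightarrow> 'x set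
     \<Rightarrow> ('x \<Rightarrow> 'n \<Rightarrow> 'n \<times> 'n \<Rightarrow> real) \<Rightarrow> ('x \<Rightarrow> real) \<Rightarrow> ('n \<Rightarrow> 'n \<times> 'n \<Rightarrow> real) set" where
  "mcf_polyhedron V E T d X w cap =
     {f. (\<forall>t e. (t \<notin> T \<or> e \<notin> E) \<longrightarrow> f t e = 0)
       \<and> conservation V E T d f
       \<and> (\<forall>x\<in>X. (\<Sum>t\<in>T. \<Sum>e\<in>E. w x t e * f t e) \<le> cap x)
       \<and> (\<forall>t e. 0 \<le> f t e)}"

lemma exists_nonneg_perturbation:
  fixes f z :: "'t \<Rightarrow> 'e \<Rightarrow> real"
  assumes "finite T" "finite E" "\<forall>t e. z t e \<noteq> 0 \<longrightarrow> t \<in> T \<and> e \<in> E \<and> 0 < f t e"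
    and "\<forall>t e. 0 \<le> f t e"
  shows "\<exists>\<epsilon>>0. \<forall>t e. 0 \<le> f t e + \<epsilon> * z t e \<and> 0 \<le> f t e - \<epsilon> * z t e"
proof -
  define K where "K = {(t, e) \<in> T \<times> E. z t e \<noteq> 0}"
  define \<epsilon> where "\<epsilon> = Min (insert 1 ((\<lambda>(t, e). f t e / \<bar>z t e\<bar>) ` K))"
  have "finite K"
    using assms(1,2) by (auto simp: K_def intro: finite_subset[of _ "T \<times> E"])
  moreover have "\<forall>(t, e)\<in>K. 0 < f t e / \<bar>z t e\<bar>"
    using assms(3) by (auto simp: K_def)
  ultimately have "0 < \<epsilon>"
    unfolding \<epsilon>_def by (subst Min_gr_iff) auto
  moreover have bound: "\<bar>\<epsilon> * z t e\<bar> \<le> f t e" for t e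
  proof (cases "z t e = 0")
    case True
    then show ?thesis
      using assms(4) by simp
  next
    case False
    then have "(t, e) \<in> K"
      using assms(3) by (simp add: K_def)
    then have "f t e / \<bar>z t e\<bar> \<in> insert 1 ((\<lambda>(t, e). f t e / \<bar>z t e\<bar>) ` K)"
      by (intro insertI2 rev_image_eqI[of "(t, e)"]) auto
    then have "\<epsilon> \<le> f t e / \<bar>z t e\<bar>"
      unfolding \<epsilon>_def using \<open>finite K\<close> by (intro Min_le) auto
    with False \<open>0 < \<epsilon>\<close> show ?thesis
      by (simp add: abs_mult pos_le_divide_eq)
  qed
  moreover have "0 \<le> f t e + \<epsilon> * z t e \<and> 0 \<le> f t e - \<epsilon> * z t e" for t e
    using bound[of t e] unfolding abs_le_iff by linarith
  ultimately show ?thesis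
    by blast
qed

lemma mcf_polyhedron_perturbation:
  assumes f: "f \<in> mcf_polyhedron V E T d X w cap" and "finite T" "finite E"
    and support: "\<forall>t e. z t e \<noteq> 0 \<longrightarrow> 0 < f t e"
    and circulation: "\<forall>t\<in>T. flow_to V E t (\<lambda>_. 0) (z t)"
    and rows: "\<forall>x\<in>X. (\<Sum>t\<in>T. \<Sum>e\<in>E. w x t e * z t e) = 0"
  shows "\<exists>\<epsilon>>0. (\<lambda>t e. f t e + \<epsilon> * z t e) \<in> mcf_polyhedron V E T d X w cap
             \<and> (\<lambda>t e. f t e - \<epsilon> * z t e) \<in> mcf_polyhedron V E T d X w cap"
proof -
  have "\<forall>t e. (t \<notin> T \<or> e \<notin> E) \<longrightarrow> f t e = 0"
    using f unfolding mcf_polyhedron_def by blast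
  then have outside: "f t e = 0" "z t e = 0" if "t \<notin> T \<or> e \<notin> E" for t e
    using that support by (metis less_irrefl)+
  have member: "(\<lambda>t e. f t e + \<delta> * z t e) \<in> mcf_polyhedron V E T d X w cap"
    if "\<forall>t e. 0 \<le> f t e + \<delta> * z t e" for \<delta>
  proof -
    have "(\<Sum>t\<in>T. \<Sum>e\<in>E. w x t e * (f t e + \<delta> * z t e))
        = (\<Sum>t\<in>T. \<Sum>e\<in>E. w x t e * f t e) + \<delta> * (\<Sum>t\<in>T. \<Sum>e\<in>E. w x t e * z t e)" for x
      by (simp add: algebra_simps sum.distrib sum_distrib_left)
    with f rows circulation that show ?thesis
      by (auto simp: mcf_polyhedron_def conservation_iff_flow_to outside flow_to_add_circulation)
  qed
  have "\<forall>t e. z t e \<noteq> 0 \<longrightarrow> t \<in> T \<and> e \<in> E \<and> 0 < f t e"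
    using support outside by blast
  moreover have "\<forall>t e. 0 \<le> f t e"
    using f unfolding mcf_polyhedron_def by blast
  ultimately obtain \<epsilon> where "\<epsilon> > 0" "\<forall>t e. 0 \<le> f t e + \<epsilon> * z t e \<and> 0 \<le> f t e - \<epsilon> * z t e"
    using exists_nonneg_perturbation[OF \<open>finite T\<close> \<open>finite E\<close>] by blast
  with member[of \<epsilon>] member[of "- \<epsilon>"] show ?thesis
    by auto
qed

lemma mcf_vertex_rigid:
  assumes vertex: "is_vertex (mcf_polyhedron V E T d X w cap) f" and "finite T" "finite E"
    and support: "\<forall>t e. z t e \<noteq> 0 \<longrightarrow> 0 < f t e"
    and "\<forall>t\<in>T. flow_to V E t (\<lambda>_. 0) (z t)"
    and "\<forall>x\<in>X. (\<Sum>t\<in>T. \<Sum>e\<in>E. w x t e * z t e) = 0"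
  shows "z = (\<lambda>_ _. 0)"
proof -
  obtain \<epsilon> where "\<epsilon> > 0"
    "(\<lambda>t e. f t e + \<epsilon> * z t e) \<in> mcf_polyhedron V E T d X w cap"
    "(\<lambda>t e. f t e - \<epsilon> * z t e) \<in> mcf_polyhedron V E T d X w cap"
    using mcf_polyhedron_perturbation[OF vertex[unfolded is_vertex_def, THEN conjunct1]] assms(2-6)
    by blast
  then show ?thesis
    using vertex_perturbation_zero[OF vertex, of \<epsilon> z] by simp
qed

lemma card_circulations_at_mcf_vertex:
  assumes vertex: "is_vertex (mcf_polyhedron V E T d X w cap) f"
    and "finite T" "finite E" "finite X"
    and ys: "\<forall>t\<in>T. lin_independent (ys t)
      \<and> (\<forall>y\<in>set (ys t). flow_to V E t (\<lambda>_. 0) y \<and> (\<forall>e. y e \<noteq> 0 \<longrightarrow> 0 < f t e))"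
  shows "(\<Sum>t\<in>T. length (ys t)) \<le> card X"
proof -
  define J where "J = Sigma T (\<lambda>t. {..<length (ys t)})"
  define u where "u j x = (\<Sum>e\<in>E. w x (fst j) e * (ys (fst j) ! snd j) e)" for j x
  have "finite J"
    using \<open>finite T\<close> by (simp add: J_def)
  have "card J \<le> card X"
  proof (rule card_le_if_independent_on[OF \<open>finite X\<close> \<open>finite J\<close>, of u], intro allI impI)
    fix c assume null: "\<forall>x\<in>X. (\<Sum>j\<in>J. c j * u j x) = 0"
    define z where "z t = (if t \<in> T then lincomb (\<lambda>i. c (t, i)) (ys t) else (\<lambda>_. 0))" for t
    have "\<forall>x\<in>X. (\<Sum>t\<in>T. \<Sum>e\<in>E. w x t e * z t e) = 0"
      using null sum_Sigma_lincomb[OF \<open>finite T\<close>, where w = "w _"] by (simp add: J_def u_def z_def)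
    moreover have "\<forall>t e. z t e \<noteq> 0 \<longrightarrow> 0 < f t e"
      using ys nth_mem by (fastforce simp: z_def dest: lincomb_neq_zero_imp split: if_splits)
    moreover have "\<forall>t\<in>T. flow_to V E t (\<lambda>_. 0) (z t)"
      using ys by (simp add: z_def flow_to_lincomb)
    ultimately have "z = (\<lambda>_ _. 0)"
      by (intro mcf_vertex_rigid[OF vertex \<open>finite T\<close> \<open>finite E\<close>])
    then have "lincomb (\<lambda>i. c (t, i)) (ys t) = (\<lambda>_. 0)" if "t \<in> T" for t
      using that by (metis z_def)
    then show "\<forall>j\<in>J. c j = 0"
      using ys by (auto simp: J_def lin_independent_def)
  qed
  moreover have "card J = (\<Sum>t\<in>T. length (ys t))"
    using \<open>finite T\<close> by (simp add: J_def)
  ultimately show ?thesis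
    by simp
qed

lemma flow2trees_count_at_mcf_vertex:
  assumes vertex: "is_vertex (mcf_polyhedron V E T d X w cap) f"
    and "finite V" "finite E" "finite T" "finite X"
    and "\<forall>t\<in>T. \<forall>v. 0 \<le> d t v" and runs: "\<forall>t\<in>T. flow2trees V E t (f t) (d t) (runs t)"
  shows "(\<Sum>t\<in>T. length (runs t)) \<le> card X + card T"
proof -
  have f: "f \<in> mcf_polyhedron V E T d X w cap"
    using vertex by (simp add: is_vertex_def)
  have "\<forall>t\<in>T. \<exists>ys. length (runs t) \<le> Suc (length ys) \<and> lin_independent ys
      \<and> (\<forall>y\<in>set ys. flow_to V E t (\<lambda>_. 0) y \<and> (\<forall>e. y e \<noteq> 0 \<longrightarrow> 0 < f t e))"
  proof
    fix t assume "t \<in> T"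
    with f have "\<forall>e. 0 \<le> f t e" "flow_to V E t (d t) (f t)"
      by (auto simp: mcf_polyhedron_def conservation_iff_flow_to)
    with \<open>t \<in> T\<close> assms(2,3,6) runs show "\<exists>ys. length (runs t) \<le> Suc (length ys) \<and> lin_independent ys
      \<and> (\<forall>y\<in>set ys. flow_to V E t (\<lambda>_. 0) y \<and> (\<forall>e. y e \<noteq> 0 \<longrightarrow> 0 < f t e))"
      by (intro flow2trees_circulations) auto
  qed
  then obtain ys where ys: "\<forall>t\<in>T. length (runs t) \<le> Suc (length (ys t)) \<and> lin_independent (ys t)
      \<and> (\<forall>y\<in>set (ys t). flow_to V E t (\<lambda>_. 0) y \<and> (\<forall>e. y e \<noteq> 0 \<longrightarrow> 0 < f t e))"
    by metis
  have "(\<Sum>t\<in>T. length (runs t)) \<le> (\<Sum>t\<in>T. Suc (length (ys t)))"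
    using ys by (intro sum_mono) auto
  also have "\<dots> = (\<Sum>t\<in>T. length (ys t)) + card T"
    by (rule sum_Suc)
  also have "(\<Sum>t\<in>T. length (ys t)) \<le> card X"
    using card_circulations_at_mcf_vertex[OF vertex \<open>finite T\<close> \<open>finite E\<close> \<open>finite X\<close>] ys
    by blast
  finally show ?thesis
    by simp
qed

section \<open>The two linear programs of the routing algorithm\<close>

lemma sum_of_bool_eq_mult:
  assumes "finite A" "a \<in> A"
  shows "(\<Sum>e\<in>A. of_bool (e = a) * h e) = (h a :: real)"
proof -
  have "(\<Sum>e\<in>A. of_bool (e = a) * h e) = (\<Sum>e\<in>A. if e = a then h e else 0)"
    by (rule sum.cong) auto
  with assms show ?thesis
    by simp
qed

lemma ball_Plus: "(\<forall>x\<in>A <+> B. P x) \<longleftrightarrow> (\<forall>a\<in>A. P (Inl a)) \<and> (\<forall>b\<in>B. P (Inr b))"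
  by (auto simp: Plus_def)

lemma lp2_set_eq_mcf_polyhedron:
  fixes E :: "('n \<times> 'n) set"
  assumes "finite E"
  shows "lp2_set V E T d cap = mcf_polyhedron V E T d E (\<lambda>x t e. of_bool (e = x)) cap"
proof -
  have "(\<Sum>t\<in>T. \<Sum>e\<in>E. of_bool (e = x) * f t e) = (\<Sum>t\<in>T. f t x)"
    if "x \<in> E" for x and f :: "'n \<Rightarrow> 'n \<times> 'n \<Rightarrow> real"
    using assms that by (simp add: sum_of_bool_eq_mult)
  then show ?thesis
    unfolding lp2_set_def mcf_polyhedron_def by (intro Collect_cong conj_cong refl) auto
qed

lemma network_finite:
  assumes "network Vsw Vpm E0 g b"
  shows "finite Vsw" "finite E0" "finite (E2 Vsw E0)" "finite (swpm Vsw Vpm E0)"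
    "finite (V1 Vsw C)" "finite (E1 Vsw Vpm E0 C)"
proof -
  show "finite Vsw" "finite E0"
    using assms unfolding network_def by (auto intro: finite_subset)
  then show "finite (E2 Vsw E0)" "finite (swpm Vsw Vpm E0)" "finite (V1 Vsw C)"
    by (simp_all add: E2_def swpm_def V1_def)
  have "{(Sw v, Pn k) | v k. v \<in> swpm Vsw Vpm E0 \<and> k \<in> {1..C}}
      \<subseteq> (\<lambda>(v, k). (Sw v, Pn k)) ` (swpm Vsw Vpm E0 \<times> {1..C})"
    by auto
  then have "finite {(Sw v, Pn k) | v k. v \<in> swpm Vsw Vpm E0 \<and> k \<in> {1..C}}"
    by (rule finite_subset) (simp add: \<open>finite (swpm Vsw Vpm E0)\<close>)
  with \<open>finite (E2 Vsw E0)\<close> show "finite (E1 Vsw Vpm E0 C)"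
    by (simp add: E1_def)
qed

text \<open>The rows of the Step-1 LP other than conservation: \<open>Inl e\<close> is the capacity
  constraint (ii) of the switch link e, \<open>Inr (Inl v)\<close> the link constraint (iii) and
  \<open>Inr (Inr v)\<close> the processing constraint (iv) at the switch v.\<close>
definition lp1_weight ::
  "(nat \<Rightarrow> real) \<Rightarrow> ('v \<times> 'v) + ('v + 'v) \<Rightarrow> 'v node1 \<Rightarrow> 'v node1 \<times> 'v node1 \<Rightarrow> real" where
  "lp1_weight p x t e = (case x of
      Inl (u, w) \<Rightarrow> of_bool (e = (Sw u, Sw w))
    | Inr (Inl v) \<Rightarrow> of_bool (e = (Sw v, t))
    | Inr (Inr v) \<Rightarrow> of_bool (e = (Sw v, t)) * (case t of Pn k \<Rightarrow> p k | Sw _ \<Rightarrow> 0))"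

definition lp1_cap ::
  "'v set \<Rightarrow> ('v \<times> 'v) set \<Rightarrow> ('v \<times> 'v \<Rightarrow> real) \<Rightarrow> ('v \<Rightarrow> real)
     \<Rightarrow> ('v \<times> 'v) + ('v + 'v) \<Rightarrow> real" where
  "lp1_cap Vpm E0 g b x = (case x of
      Inl e \<Rightarrow> g e
    | Inr (Inl v) \<Rightarrow> min (g (v, hat Vpm E0 v)) (g (hat Vpm E0 v, v))
    | Inr (Inr v) \<Rightarrow> b (hat Vpm E0 v))"

lemma lp1_weight_rows:
  fixes Vsw :: "'v set" and C :: nat and p :: "nat \<Rightarrow> real"
    and f :: "'v node1 \<Rightarrow> 'v node1 \<times> 'v node1 \<Rightarrow> real"
  assumes "network Vsw Vpm E0 g b"
  defines "row x \<equiv> \<Sum>t\<in>Pn ` {1..C}. \<Sum>e\<in>E1 Vsw Vpm E0 C. lp1_weight p x t e * f t e"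
  shows "e \<in> E2 Vsw E0 \<Longrightarrow> row (Inl e) = (\<Sum>t\<in>Pn ` {1..C}. f t (Sw (fst e), Sw (snd e)))"
    and "v \<in> swpm Vsw Vpm E0 \<Longrightarrow> row (Inr (Inl v)) = (\<Sum>k\<in>{1..C}. f (Pn k) (Sw v, Pn k))"
    and "v \<in> swpm Vsw Vpm E0 \<Longrightarrow> row (Inr (Inr v)) = (\<Sum>k\<in>{1..C}. p k * f (Pn k) (Sw v, Pn k))"
proof -
  let ?E1 = "E1 Vsw Vpm E0 C" and ?T = "Pn ` {1..C} :: 'v node1 set"
  have fin: "finite ?E1"
    using network_finite[OF assms(1)] by blast
  have reindex: "(\<Sum>t\<in>?T. h t) = (\<Sum>k\<in>{1..C}. h (Pn k))" for h :: "'v node1 \<Rightarrow> real"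
    by (subst sum.reindex) (auto simp: inj_on_def)
  show "row (Inl e) = (\<Sum>t\<in>?T. f t (Sw (fst e), Sw (snd e)))" if "e \<in> E2 Vsw E0"
  proof -
    have "(Sw (fst e), Sw (snd e)) \<in> ?E1"
      using that by (force simp: E1_def)
    then show ?thesis
      unfolding row_def lp1_weight_def
      by (simp only: sum.case case_prod_beta sum_of_bool_eq_mult[OF fin])
  qed
  assume "v \<in> swpm Vsw Vpm E0"
  then have "(Sw v, t) \<in> ?E1" if "t \<in> ?T" for t
    using that by (auto simp: E1_def)
  then have "(\<Sum>e\<in>?E1. lp1_weight p (Inr (Inl v)) t e * f t e) = f t (Sw v, t)"
    "(\<Sum>e\<in>?E1. lp1_weight p (Inr (Inr v)) t e * f t e)
      = (case t of Pn k \<Rightarrow> p k | Sw _ \<Rightarrow> 0) * f t (Sw v, t)"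
    if "t \<in> ?T" for t
    unfolding lp1_weight_def using that
    by (simp_all only: sum.case mult.assoc sum_of_bool_eq_mult[OF fin])
  then show "row (Inr (Inl v)) = (\<Sum>k\<in>{1..C}. f (Pn k) (Sw v, Pn k))"
    "row (Inr (Inr v)) = (\<Sum>k\<in>{1..C}. p k * f (Pn k) (Sw v, Pn k))"
    unfolding row_def
    by (simp_all only: reindex[of "\<lambda>t. \<Sum>e\<in>?E1. _ t e"] image_iff node1.case) auto
qed

lemma lp1_set_eq_mcf_polyhedron:
  assumes "network Vsw Vpm E0 g b"
  shows "lp1_set Vsw Vpm E0 g b M src dem cl C p
    = mcf_polyhedron (V1 Vsw C) (E1 Vsw Vpm E0 C) (Pn ` {1..C}) (d1 M src dem cl)
        (E2 Vsw E0 <+> (swpm Vsw Vpm E0 <+> swpm Vsw Vpm E0)) (lp1_weight p) (lp1_cap Vpm E0 g b)"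
proof -
  have "(\<forall>x\<in>E2 Vsw E0 <+> (swpm Vsw Vpm E0 <+> swpm Vsw Vpm E0).
      (\<Sum>t\<in>Pn ` {1..C}. \<Sum>e\<in>E1 Vsw Vpm E0 C. lp1_weight p x t e * f t e) \<le> lp1_cap Vpm E0 g b x)
    \<longleftrightarrow> (\<forall>e\<in>E2 Vsw E0. (\<Sum>t\<in>Pn ` {1..C}. f t (Sw (fst e), Sw (snd e))) \<le> g e)
      \<and> (\<forall>v\<in>swpm Vsw Vpm E0. (\<Sum>k\<in>{1..C}. f (Pn k) (Sw v, Pn k))
            \<le> min (g (v, hat Vpm E0 v)) (g (hat Vpm E0 v, v)))
      \<and> (\<forall>v\<in>swpm Vsw Vpm E0. (\<Sum>k\<in>{1..C}. p k * f (Pn k) (Sw v, Pn k)) \<le> b (hat Vpm E0 v))"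
    for f
    unfolding ball_Plus lp1_cap_def sum.case
    by (intro arg_cong2[where f = conj] ball_cong refl)
      (simp_all only: lp1_weight_rows[OF assms])
  then show ?thesis
    unfolding lp1_set_def mcf_polyhedron_def by (simp only: conj_assoc)
qed

lemma network_pm_links:
  assumes "network Vsw Vpm E0 g b" "u \<in> Vpm"
  shows "\<exists>v. (u, v) \<in> E0" and "(u, y) \<in> E0 \<Longrightarrow> y \<in> Vsw"
proof -
  have "\<forall>u\<in>Vpm. \<exists>v\<in>Vsw. {e \<in> E0. fst e = u \<or> snd e = u} = {(u, v), (v, u)}"
    using assms(1) unfolding network_def by blast
  then obtain v where "v \<in> Vsw" and links: "{e \<in> E0. fst e = u \<or> snd e = u} = {(u, v), (v, u)}"
    using assms(2) by blast
  show "\<exists>v. (u, v) \<in> E0"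
    using links by (blast dest: equalityD2)
  show "y \<in> Vsw" if "(u, y) \<in> E0"
  proof -
    have "(u, y) \<in> {(u, v), (v, u)}"
      using that by (simp add: links[symmetric])
    with \<open>v \<in> Vsw\<close> show ?thesis
      by auto
  qed
qed

lemma card_E2_swpm_Vpm_le:
  assumes net: "network Vsw Vpm E0 g b"
  shows "card (E2 Vsw E0) + card (swpm Vsw Vpm E0) + card Vpm \<le> card E0"
proof -
  define A where "A = {e \<in> E0. fst e \<in> Vpm}"
  define B where "B = {e \<in> E0. snd e \<in> Vpm}"
  have "finite E0"
    using network_finite[OF net] by blast
  then have fin: "finite A" "finite B" "finite (E2 Vsw E0)"
    by (simp_all add: A_def B_def E2_def)
  have disj: "Vsw \<inter> Vpm = {}"
    using net unfolding network_def by blast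
  have "Vpm \<subseteq> fst ` A"
  proof
    fix u assume "u \<in> Vpm"
    then obtain v where "(u, v) \<in> E0"
      using network_pm_links(1)[OF net] by blast
    with \<open>u \<in> Vpm\<close> have "(u, v) \<in> A"
      by (simp add: A_def)
    then show "u \<in> fst ` A"
      by force
  qed
  then have "card Vpm \<le> card A"
    using fin(1) by (meson card_image_le card_mono finite_imageI le_trans)
  have "swpm Vsw Vpm E0 \<subseteq> fst ` B"
    unfolding swpm_def B_def by force
  then have "card (swpm Vsw Vpm E0) \<le> card B"
    using fin(2) by (meson card_image_le card_mono finite_imageI le_trans)
  have "e \<notin> B" if "e \<in> A" for e
    using that network_pm_links(2)[OF net, of "fst e" "snd e"] disj by (auto simp: A_def B_def)
  then have "A \<inter> B = {}"
    by blast
  moreover have "E2 Vsw E0 \<inter> (A \<union> B) = {}"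
    using disj by (auto simp: A_def B_def E2_def)
  ultimately have "card (E2 Vsw E0 \<union> (A \<union> B)) = card (E2 Vsw E0) + card A + card B"
    using fin by (simp add: card_Un_disjoint)
  moreover have "card (E2 Vsw E0 \<union> (A \<union> B)) \<le> card E0"
    using \<open>finite E0\<close> by (intro card_mono) (auto simp: A_def B_def E2_def)
  ultimately show ?thesis
    using \<open>card Vpm \<le> card A\<close> \<open>card (swpm Vsw Vpm E0) \<le> card B\<close> by linarith
qed

lemma d1_nonneg: "commodities Vsw M src dst dem cl C p \<Longrightarrow> 0 \<le> d1 M src dem cl t v"
  by (cases "(M, src, dem, cl, t, v)" rule: d1.cases)
    (auto simp: commodities_def less_imp_le intro!: sum_nonneg)

lemma d2_nonneg:
  assumes com: "commodities Vsw M src dst dem cl C p"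
    and trees1: "\<forall>k\<in>{1..C}. flow2trees (V1 Vsw C) (E1 Vsw Vpm E0 C) (Pn k)
                              (f1 (Pn k)) (d1 M src dem cl (Pn k)) (runs1 k)"
  shows "0 \<le> d2 Vsw M src dst dem cl C runs1 t v"
proof -
  have "0 \<le> dem i" if "i \<in> {1..M}" for i
    using com that by (auto simp: commodities_def less_imp_le)
  then have "0 \<le> Dcst M src dst dem cl k s t" "0 \<le> Dcs M src dem cl k s" for k s
    by (auto simp: Dcst_def Dcs_def intro!: sum_nonneg)
  moreover have "0 \<le> a x" if "k \<in> {1..C}" "(R, a) \<in> set (runs1 k)" for k R a x
    using flow2trees_amounts_nonneg[OF trees1[rule_format, OF that(1)] that(2)] .
  ultimately show ?thesis
    unfolding d2_def by (fastforce intro!: sum_nonneg sum_list_nonneg)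
qed

lemma step1_tree_count:
  fixes Vsw :: "'v set"
  assumes net: "network Vsw Vpm E0 g b"
    and com: "commodities Vsw M src dst dem cl C p"
    and bfs1: "is_vertex (lp1_set Vsw Vpm E0 g b M src dem cl C p) f1"
    and trees1: "\<forall>k\<in>{1..C}. flow2trees (V1 Vsw C) (E1 Vsw Vpm E0 C) (Pn k)
                              (f1 (Pn k)) (d1 M src dem cl (Pn k)) (runs1 k)"
  shows "(\<Sum>k\<in>{1..C}. length (runs1 k)) \<le> card (E2 Vsw E0) + 2 * card (swpm Vsw Vpm E0) + C"
proof -
  define runs where "runs t = (case t of Pn k \<Rightarrow> runs1 k | Sw _ \<Rightarrow> [])" for t :: "'v node1"
  have inj: "inj_on (Pn :: nat \<Rightarrow> 'v node1) {1..C}"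
    by (simp add: inj_on_def)
  have runs: "\<forall>t\<in>Pn ` {1..C}. flow2trees (V1 Vsw C) (E1 Vsw Vpm E0 C) t (f1 t) (d1 M src dem cl t) (runs t)"
    using trees1 by (auto simp: runs_def)
  have "(\<Sum>t\<in>Pn ` {1..C}. length (runs t))
      \<le> card (E2 Vsw E0 <+> (swpm Vsw Vpm E0 <+> swpm Vsw Vpm E0)) + card (Pn ` {1..C} :: 'v node1 set)"
    by (rule flow2trees_count_at_mcf_vertex[OF bfs1[unfolded lp1_set_eq_mcf_polyhedron[OF net]]])
      (use runs network_finite[OF net] d1_nonneg[OF com] in auto)
  moreover have "(\<Sum>t\<in>Pn ` {1..C}. length (runs t)) = (\<Sum>k\<in>{1..C}. length (runs1 k))"
    unfolding sum.reindex[OF inj] by (simp add: runs_def)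
  moreover have "card (Pn ` {1..C} :: 'v node1 set) = C"
    using card_image[OF inj] by simp
  ultimately show ?thesis
    using network_finite[OF net] by (simp add: card_Plus)
qed

lemma step2_tree_count:
  assumes net: "network Vsw Vpm E0 g b"
    and com: "commodities Vsw M src dst dem cl C p"
    and trees1: "\<forall>k\<in>{1..C}. flow2trees (V1 Vsw C) (E1 Vsw Vpm E0 C) (Pn k)
                              (f1 (Pn k)) (d1 M src dem cl (Pn k)) (runs1 k)"
    and bfs2: "is_vertex (lp2_set Vsw (E2 Vsw E0) (dst ` {1..M})
                             (d2 Vsw M src dst dem cl C runs1) (gbar Vsw C g f1)) f2"
    and trees2: "\<forall>t\<in>dst ` {1..M}. flow2trees Vsw (E2 Vsw E0) t (f2 t)
                              (d2 Vsw M src dst dem cl C runs1 t) (runs2 t)"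
  shows "(\<Sum>t\<in>dst ` {1..M}. length (runs2 t)) \<le> card (E2 Vsw E0) + card (dst ` {1..M})"
  by (rule flow2trees_count_at_mcf_vertex[OF bfs2[unfolded lp2_set_eq_mcf_polyhedron[OF network_finite(3)[OF net]]]])
    (use trees2 network_finite[OF net] d2_nonneg[OF com trees1] in auto)

theorem theorem1:
  fixes Vsw Vpm :: "'v set" and E0 :: "('v \<times> 'v) set"
    and g :: "'v \<times> 'v \<Rightarrow> real" and b :: "'v \<Rightarrow> real"
    and M :: nat and src dst :: "nat \<Rightarrow> 'v" and dem :: "nat \<Rightarrow> real" and cl :: "nat \<Rightarrow> nat"
    and C :: nat and p :: "nat \<Rightarrow> real"
    and f1 :: "'v node1 \<Rightarrow> 'v node1 \<times> 'v node1 \<Rightarrow> real"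
    and runs1 :: "nat \<Rightarrow> (('v node1 \<times> 'v node1) set \<times> ('v node1 \<Rightarrow> real)) list"
    and f2 :: "'v \<Rightarrow> 'v \<times> 'v \<Rightarrow> real"
    and runs2 :: "'v \<Rightarrow> (('v \<times> 'v) set \<times> ('v \<Rightarrow> real)) list"
  assumes net: "network Vsw Vpm E0 g b"
    and com: "commodities Vsw M src dst dem cl C p"
    and bfs1: "is_vertex (lp1_set Vsw Vpm E0 g b M src dem cl C p) f1"
    and trees1: "\<forall>k\<in>{1..C}. flow2trees (V1 Vsw C) (E1 Vsw Vpm E0 C) (Pn k)
                              (f1 (Pn k)) (d1 M src dem cl (Pn k)) (runs1 k)"
    and bfs2: "is_vertex (lp2_set Vsw (E2 Vsw E0) (dst ` {1..M})
                             (d2 Vsw M src dst dem cl C runs1) (gbar Vsw C g f1)) f2"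
    and trees2: "\<forall>t\<in>dst ` {1..M}. flow2trees Vsw (E2 Vsw E0) t (f2 t)
                              (d2 Vsw M src dst dem cl C runs1 t) (runs2 t)"
  shows "int (\<Sum>k\<in>{1..C}. length (runs1 k)) + int (\<Sum>t\<in>dst ` {1..M}. length (runs2 t))
           \<le> int C + 2 * int (card E0) + int (card (dst ` {1..M})) - 2 * int (card Vpm)"
  using step1_tree_count[OF net com bfs1 trees1] step2_tree_count[OF net com trees1 bfs2 trees2]
    card_E2_swpm_Vpm_le[OF net]
  by linarith

end
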